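(* Fix integers $p,q\ge 0$ and integers $L_1,\dots,L_q\ge 1$. Fix an observation $(x,y)$ with $x=(x_1,\dots,x_p)\in\mathbb{R}^p$ and $y=(y_1,\dots,y_q)$, $y_j\in\{1,\dots,L_j\}$. Consider the parameters $\Theta=\{\beta_{ss},\beta_{st},\alpha_s,\rho_{sj},\phi_{rj}\}$, where $\beta_{st}=\beta_{ts}\in\mathbb{R}$ for $s,t\in\{1,\dots,p\}$, $\alpha_s\in\mathbb{R}$, $\rho_{sj}=(\rho_{sj}(1),\dots,\rho_{sj}(L_j))\in\mathbb{R}^{L_j}$ for $s\le p$, $j\le q$, and $\phi_{rj}\in\mathbb{R}^{L_r\times L_j}$ for $r,j\le q$ with $\phi_{rj}(a,b)=\phi_{jr}(b,a)$ (so symmetric pairs are one and the same parameter). Define the negative log pseudolikelihood $$\tilde\ell(\Theta\mid x,y)=-\sum_{s=1}^p\log p(x_s\mid x_{\setminus s},y;\Theta)-\sum_{r=1}^q\log p(y_r\mid x,y_{\setminus r};\Theta),$$ where $$p(x_s\mid x_{\setminus s},y;\Theta)=\frac{\sqrt{\beta_{ss}}}{\sqrt{2\pi}}\exp\!\left(-\frac{\beta_{ss}}{2}\left(\frac{\alpha_s+\sum_{j=1}^q\rho_{sj}(y_j)-\sum_{t\ne s}\beta_{st}x_t}{\beta_{ss}}-x_s\right)^2\right)$$ and $$p(y_r\mid x,y_{\setminus r};\Theta)=\frac{\exp\!\left(\sum_{s=1}^p\rho_{sr}(y_r)x_s+\phi_{rr}(y_r,y_r)+\sum_{j\ne r}\phi_{rj}(y_r,y_j)\right)}{\sum_{l=1}^{L_r}\exp\!\left(\sum_{s=1}^p\rho_{sr}(l)x_s+\phi_{rr}(l,l)+\sum_{j\ne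 r}\phi_{rj}(l,y_j)\right)}.$$ Then $\tilde\ell(\Theta\mid x,y)$ is jointly convex in all the parameters $\{\beta_{ss},\beta_{st},\alpha_s,\phi_{rj},\rho_{sj}\}$ over the region where $\beta_{ss}>0$ for all $s=1,\dots,p$.
   Context: This is the pseudolikelihood of a pairwise mixed graphical model on $p$ continuous variables $x_s$ and $q$ discrete variables $y_j$ (taking $L_j$ states), with joint density proportional to $\exp\big(\sum_{s,t}-\tfrac12\beta_{st}x_sx_t+\sum_s\alpha_sx_s+\sum_{s,j}\rho_{sj}(y_j)x_s+\sum_{r,j}\phi_{rj}(y_r,y_j)\big)$; the displayed conditionals are the Gaussian (for $x_s$) and multinomial-logistic (for $y_r$) conditional distributions of this model. Here $x_{\setminus s}$ denotes all continuous coordinates except $x_s$ and $y_{\setminus r}$ all discrete coordinates except $y_r$. *)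

theory Defs
  imports "HOL-Analysis.Analysis"
begin

text \<open>Indices are 1-based:
 continuous variables s in {1..p}, discrete variables r in {1..q}, levels of y_j in {1..L j}.
 Parameters: beta s t, alpha s, rho s j l (= rho_{sj}(l)), phi r j a b (= phi_{rj}(a,b)).\<close>

definition cond_x ::
  "nat \<Rightarrow> nat \<Rightarrow> (nat \<Rightarrow> nat \<Rightarrow> real) \<Rightarrow> (nat \<Rightarrow> real) \<Rightarrow> (nat \<Rightarrow> nat \<Rightarrow> nat \<Rightarrow> real)
   \<Rightarrow> (nat \<Rightarrow> real) \<Rightarrow> (nat \<Rightarrow> nat) \<Rightarrow> nat \<Rightarrow> real" where
  "cond_x p q \<beta> \<alpha> \<rho> x y s =
     sqrt (\<beta> s s) / sqrt (2 * pi) *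
     exp (- (\<beta> s s / 2) *
       ((\<alpha> s + (\<Sum>j\<in>{1..q}. \<rho> s j (y j)) - (\<Sum>t\<in>{1..p} - {s}. \<beta> s t * x t)) / \<beta> s s
         - x s)\<^sup>2)"

definition cond_y ::
  "nat \<Rightarrow> nat \<Rightarrow> (nat \<Rightarrow> nat) \<Rightarrow> (nat \<Rightarrow> nat \<Rightarrow> nat \<Rightarrow> real) \<Rightarrow> (nat \<Rightarrow> nat \<Rightarrow> nat \<Rightarrow> nat \<Rightarrow> real)
   \<Rightarrow> (nat \<Rightarrow> real) \<Rightarrow> (nat \<Rightarrow> nat) \<Rightarrow> nat \<Rightarrow> real" where
  "cond_y p q L \<rho> \<phi> x y r =
     exp ((\<Sum>s\<in>{1..p}. \<rho> s r (y r) * x s) + \<phi> r r (y r) (y r)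
          + (\<Sum>j\<in>{1..q} - {r}. \<phi> r j (y r) (y j)))
     / (\<Sum>l\<in>{1..L r}. exp ((\<Sum>s\<in>{1..p}. \<rho> s r l * x s) + \<phi> r r l l
          + (\<Sum>j\<in>{1..q} - {r}. \<phi> r j l (y j))))"

definition neg_log_pl ::
  "nat \<Rightarrow> nat \<Rightarrow> (nat \<Rightarrow> nat) \<Rightarrow> (nat \<Rightarrow> nat \<Rightarrow> real) \<Rightarrow> (nat \<Rightarrow> real)
   \<Rightarrow> (nat \<Rightarrow> nat \<Rightarrow> nat \<Rightarrow> real) \<Rightarrow> (nat \<Rightarrow> nat \<Rightarrow> nat \<Rightarrow> nat \<Rightarrow> real)
   \<Rightarrow> (nat \<Rightarrow> real) \<Rightarrow> (nat \<Rightarrow> nat) \<Rightarrow> real" where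
  "neg_log_pl p q L \<beta> \<alpha> \<rho> \<phi> x y =
     - (\<Sum>s\<in>{1..p}. ln (cond_x p q \<beta> \<alpha> \<rho> x y s))
     - (\<Sum>r\<in>{1..q}. ln (cond_y p q L \<rho> \<phi> x y r))"

definition param_region ::
  "nat \<Rightarrow> nat \<Rightarrow> (nat \<Rightarrow> nat) \<Rightarrow> (nat \<Rightarrow> nat \<Rightarrow> real) \<Rightarrow> (nat \<Rightarrow> nat \<Rightarrow> nat \<Rightarrow> nat \<Rightarrow> real) \<Rightarrow> bool" where
  "param_region p q L \<beta> \<phi> \<longleftrightarrow>
     (\<forall>s\<in>{1..p}. \<forall>t\<in>{1..p}. \<beta> s t = \<beta> t s) \<and>
     (\<forall>s\<in>{1..p}. \<beta> s s > 0) \<and>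
     (\<forall>r\<in>{1..q}. \<forall>j\<in>{1..q}. \<forall>a\<in>{1..L r}. \<forall>b\<in>{1..L j}. \<phi> r j a b = \<phi> j r b a)"

end

theory Submission
  imports Defs
begin

text \<open>Every summand of the negative log pseudolikelihood is convex along segments in parameter
space. For a continuous node, \<open>- ln p(x\<^sub>s | \<dots>)\<close> equals
\<open>ln (2\<pi>) / 2 + (w\<^sup>2 / \<beta>\<^sub>s\<^sub>s - ln \<beta>\<^sub>s\<^sub>s) / 2\<close>, where the residual
\<open>w = \<alpha>\<^sub>s + \<Sum>\<^sub>j \<rho>\<^sub>s\<^sub>j(y\<^sub>j) - \<Sum>\<^sub>t \<beta>\<^sub>s\<^sub>t x\<^sub>t\<close> is linear in the parameters; \<open>w\<^sup>2 / b\<close> is the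
perspective of the square, hence jointly convex for \<open>b > 0\<close>, and \<open>- ln b\<close> is convex.
For a discrete node, \<open>- ln p(y\<^sub>r | \<dots>)\<close> is log-sum-exp of linear functions of the parameters
minus a linear function, and log-sum-exp is convex.\<close>

lemma convex_comb_pos:
  fixes u a b :: real
  assumes "0 \<le> u" "u \<le> 1" "0 < a" "0 < b"
  shows "0 < (1 - u) * a + u * b"
  using assms by (cases "u = 0") (auto intro: add_nonneg_pos add_pos_nonneg)

lemma sum_convex_comb_le:
  fixes f g h :: "'a \<Rightarrow> real"
  assumes "\<And>i. i \<in> S \<Longrightarrow> f i \<le> (1 - u) * g i + u * h i"
  shows "(\<Sum>i\<in>S. f i) \<le> (1 - u) * (\<Sum>i\<in>S. g i) + u * (\<Sum>i\<in>S. h i)"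
  unfolding sum_distrib_left sum.distrib[symmetric] using assms by (rule sum_mono)

lemma convex_comb_affine_le:
  fixes u c k X X1 X2 :: real
  assumes "0 \<le> k" "X \<le> (1 - u) * X1 + u * X2"
  shows "c + k * X \<le> (1 - u) * (c + k * X1) + u * (c + k * X2)"
proof -
  have "(1 - u) * (c + k * X1) + u * (c + k * X2) = c + k * ((1 - u) * X1 + u * X2)"
    by (simp add: algebra_simps)
  with assms show ?thesis
    by (simp add: mult_left_mono)
qed

lemma quad_over_lin_convex_comb:
  fixes u w1 w2 b1 b2 :: real
  assumes "0 \<le> u" "u \<le> 1" "0 < b1" "0 < b2"
  shows "((1 - u) * w1 + u * w2)\<^sup>2 / ((1 - u) * b1 + u * b2)
           \<le> (1 - u) * (w1\<^sup>2 / b1) + u * (w2\<^sup>2 / b2)"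
proof -
  have gap: "((1 - u) * (w1\<^sup>2 / b1) + u * (w2\<^sup>2 / b2)) * ((1 - u) * b1 + u * b2)
               - ((1 - u) * w1 + u * w2)\<^sup>2
           = (1 - u) * u * (w1 * b2 - w2 * b1)\<^sup>2 / (b1 * b2)"
    using assms by (simp add: field_simps power2_eq_square)
  have "0 \<le> (1 - u) * u * (w1 * b2 - w2 * b1)\<^sup>2 / (b1 * b2)"
    using assms by simp
  with gap convex_comb_pos[OF assms] show ?thesis
    by (simp add: divide_le_eq)
qed

lemma gaussian_nll_convex_comb:
  fixes u w1 w2 b1 b2 :: real
  assumes "0 \<le> u" "u \<le> 1" "0 < b1" "0 < b2"
  shows "((1 - u) * w1 + u * w2)\<^sup>2 / ((1 - u) * b1 + u * b2) - ln ((1 - u) * b1 + u * b2)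
           \<le> (1 - u) * (w1\<^sup>2 / b1 - ln b1) + u * (w2\<^sup>2 / b2 - ln b2)"
proof -
  have "(1 - u) * ln b1 + u * ln b2 \<le> ln ((1 - u) * b1 + u * b2)"
    using concave_onD[OF ln_concave, of u b1 b2] assms by simp
  with quad_over_lin_convex_comb[OF assms, of w1 w2] show ?thesis
    by (simp add: algebra_simps)
qed

lemma ln_sum_exp_convex_comb:
  fixes u :: real and a b :: "'a \<Rightarrow> real"
  assumes "0 \<le> u" "u \<le> 1" "finite S" "S \<noteq> {}"
  shows "ln (\<Sum>l\<in>S. exp ((1 - u) * a l + u * b l))
           \<le> (1 - u) * ln (\<Sum>l\<in>S. exp (a l)) + u * ln (\<Sum>l\<in>S. exp (b l))"
proof -
  define A where "A = (\<Sum>l\<in>S. exp (a l))"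
  define B where "B = (\<Sum>l\<in>S. exp (b l))"
  have "0 < A" "0 < B"
    unfolding A_def B_def using assms by (auto intro: sum_pos)
  define K where "K = (1 - u) * ln A + u * ln B"
  \<comment> \<open>Normalising by \<open>exp K\<close> turns the claim into convexity of \<open>exp\<close> applied to two
      probability vectors.\<close>
  have termwise: "exp ((1 - u) * a l + u * b l) / exp K
                    \<le> (1 - u) * (exp (a l) / A) + u * (exp (b l) / B)" for l
  proof -
    have "exp ((1 - u) * a l + u * b l) / exp K
            = exp ((1 - u) * (a l - ln A) + u * (b l - ln B))"
      unfolding K_def by (simp add: exp_diff[symmetric] algebra_simps)
    also have "\<dots> \<le> (1 - u) * exp (a l - ln A) + u * exp (b l - ln B)"
      using convex_onD[OF exp_convex, of u "a l - ln A" "b l - ln B"] assms by simp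
    also have "\<dots> = (1 - u) * (exp (a l) / A) + u * (exp (b l) / B)"
      using \<open>0 < A\<close> \<open>0 < B\<close> by (simp add: exp_diff)
    finally show ?thesis .
  qed
  have "(\<Sum>l\<in>S. exp ((1 - u) * a l + u * b l)) / exp K
          = (\<Sum>l\<in>S. exp ((1 - u) * a l + u * b l) / exp K)"
    by (simp add: sum_divide_distrib)
  also have "\<dots> \<le> (1 - u) * (\<Sum>l\<in>S. exp (a l) / A) + u * (\<Sum>l\<in>S. exp (b l) / B)"
    using termwise by (rule sum_convex_comb_le)
  also have "\<dots> = 1"
    using \<open>0 < A\<close> \<open>0 < B\<close> by (simp add: A_def B_def flip: sum_divide_distrib)
  finally have "(\<Sum>l\<in>S. exp ((1 - u) * a l + u * b l)) \<le> exp K"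
    by simp
  moreover have "0 < (\<Sum>l\<in>S. exp ((1 - u) * a l + u * b l))"
    using assms by (intro sum_pos) auto
  ultimately show ?thesis
    unfolding K_def A_def B_def by (metis ln_exp ln_le_cancel_iff exp_gt_zero)
qed

definition x_residual ::
  "nat \<Rightarrow> nat \<Rightarrow> (nat \<Rightarrow> nat \<Rightarrow> real) \<Rightarrow> (nat \<Rightarrow> real) \<Rightarrow> (nat \<Rightarrow> nat \<Rightarrow> nat \<Rightarrow> real)
   \<Rightarrow> (nat \<Rightarrow> real) \<Rightarrow> (nat \<Rightarrow> nat) \<Rightarrow> nat \<Rightarrow> real" where
  "x_residual p q \<beta> \<alpha> \<rho> x y s =
     \<alpha> s + (\<Sum>j\<in>{1..q}. \<rho> s j (y j)) - (\<Sum>t\<in>{1..p}. \<beta> s t * x t)"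

lemma x_residual_convex_comb:
  "x_residual p q (\<lambda>s t. (1 - u) * \<beta>1 s t + u * \<beta>2 s t) (\<lambda>s. (1 - u) * \<alpha>1 s + u * \<alpha>2 s)
     (\<lambda>s j l. (1 - u) * \<rho>1 s j l + u * \<rho>2 s j l) x y s
   = (1 - u) * x_residual p q \<beta>1 \<alpha>1 \<rho>1 x y s + u * x_residual p q \<beta>2 \<alpha>2 \<rho>2 x y s"
  unfolding x_residual_def by (simp add: algebra_simps sum.distrib sum_distrib_left sum_subtractf)

lemma neg_ln_cond_x:
  assumes "s \<in> {1..p}" "0 < \<beta> s s"
  shows "- ln (cond_x p q \<beta> \<alpha> \<rho> x y s)
           = ln (2 * pi) / 2 + 1 / 2 * ((x_residual p q \<beta> \<alpha> \<rho> x y s)\<^sup>2 / \<beta> s s - ln (\<beta> s s))"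
proof -
  let ?c = "\<alpha> s + (\<Sum>j\<in>{1..q}. \<rho> s j (y j)) - (\<Sum>t\<in>{1..p} - {s}. \<beta> s t * x t)"
  have "(\<Sum>t\<in>{1..p}. \<beta> s t * x t) = \<beta> s s * x s + (\<Sum>t\<in>{1..p} - {s}. \<beta> s t * x t)"
    using assms(1) by (rule sum.remove[OF finite_atLeastAtMost])
  then have residual: "?c - \<beta> s s * x s = x_residual p q \<beta> \<alpha> \<rho> x y s"
    unfolding x_residual_def by simp
  have "- ln (cond_x p q \<beta> \<alpha> \<rho> x y s)
          = ln (sqrt (2 * pi)) - ln (sqrt (\<beta> s s)) + (\<beta> s s / 2) * (?c / \<beta> s s - x s)\<^sup>2"
    unfolding cond_x_def using assms(2) by (simp add: ln_mult ln_div)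
  also have "(\<beta> s s / 2) * (?c / \<beta> s s - x s)\<^sup>2 = (?c - \<beta> s s * x s)\<^sup>2 / \<beta> s s / 2"
    using assms(2) by (simp add: field_simps power2_eq_square)
  finally show ?thesis
    unfolding residual using assms(2) by (simp add: ln_sqrt field_simps)
qed

lemma neg_ln_cond_x_convex_comb:
  assumes "0 \<le> u" "u \<le> 1" "s \<in> {1..p}" "0 < \<beta>1 s s" "0 < \<beta>2 s s"
  shows "- ln (cond_x p q (\<lambda>s t. (1 - u) * \<beta>1 s t + u * \<beta>2 s t) (\<lambda>s. (1 - u) * \<alpha>1 s + u * \<alpha>2 s)
                 (\<lambda>s j l. (1 - u) * \<rho>1 s j l + u * \<rho>2 s j l) x y s)
           \<le> (1 - u) * - ln (cond_x p q \<beta>1 \<alpha>1 \<rho>1 x y s) + u * - ln (cond_x p q \<beta>2 \<alpha>2 \<rho>2 x y s)"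
proof -
  let ?w1 = "x_residual p q \<beta>1 \<alpha>1 \<rho>1 x y s" and ?w2 = "x_residual p q \<beta>2 \<alpha>2 \<rho>2 x y s"
  have "((1 - u) * ?w1 + u * ?w2)\<^sup>2 / ((1 - u) * \<beta>1 s s + u * \<beta>2 s s)
          - ln ((1 - u) * \<beta>1 s s + u * \<beta>2 s s)
        \<le> (1 - u) * (?w1\<^sup>2 / \<beta>1 s s - ln (\<beta>1 s s)) + u * (?w2\<^sup>2 / \<beta>2 s s - ln (\<beta>2 s s))"
    using assms by (intro gaussian_nll_convex_comb)
  moreover have "- ln (cond_x p q (\<lambda>s t. (1 - u) * \<beta>1 s t + u * \<beta>2 s t)
                 (\<lambda>s. (1 - u) * \<alpha>1 s + u * \<alpha>2 s) (\<lambda>s j l. (1 - u) * \<rho>1 s j l + u * \<rho>2 s j l) x y s)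
      = ln (2 * pi) / 2 + 1 / 2 * (((1 - u) * ?w1 + u * ?w2)\<^sup>2 / ((1 - u) * \<beta>1 s s + u * \<beta>2 s s)
          - ln ((1 - u) * \<beta>1 s s + u * \<beta>2 s s))"
    using neg_ln_cond_x[OF assms(3), where \<beta> = "\<lambda>s t. (1 - u) * \<beta>1 s t + u * \<beta>2 s t"]
      convex_comb_pos[OF assms(1,2,4,5)]
    by (simp only: x_residual_convex_comb)
  ultimately show ?thesis
    unfolding neg_ln_cond_x[where \<beta> = \<beta>1, OF assms(3,4)] neg_ln_cond_x[where \<beta> = \<beta>2, OF assms(3,5)]
    by (simp only:) (rule convex_comb_affine_le, simp_all)
qed

definition logit ::
  "nat \<Rightarrow> nat \<Rightarrow> (nat \<Rightarrow> nat \<Rightarrow> nat \<Rightarrow> real) \<Rightarrow> (nat \<Rightarrow> nat \<Rightarrow> nat \<Rightarrow> nat \<Rightarrow> real)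
   \<Rightarrow> (nat \<Rightarrow> real) \<Rightarrow> (nat \<Rightarrow> nat) \<Rightarrow> nat \<Rightarrow> nat \<Rightarrow> real" where
  "logit p q \<rho> \<phi> x y r l =
     (\<Sum>s\<in>{1..p}. \<rho> s r l * x s) + \<phi> r r l l + (\<Sum>j\<in>{1..q} - {r}. \<phi> r j l (y j))"

lemma logit_convex_comb:
  "logit p q (\<lambda>s j l. (1 - u) * \<rho>1 s j l + u * \<rho>2 s j l)
     (\<lambda>r j a b. (1 - u) * \<phi>1 r j a b + u * \<phi>2 r j a b) x y r l
   = (1 - u) * logit p q \<rho>1 \<phi>1 x y r l + u * logit p q \<rho>2 \<phi>2 x y r l"
  unfolding logit_def by (simp add: algebra_simps sum.distrib sum_distrib_left sum_subtractf)

lemma neg_ln_cond_y: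
  assumes "1 \<le> L r"
  shows "- ln (cond_y p q L \<rho> \<phi> x y r)
           = ln (\<Sum>l\<in>{1..L r}. exp (logit p q \<rho> \<phi> x y r l)) - logit p q \<rho> \<phi> x y r (y r)"
proof -
  have "0 < (\<Sum>l\<in>{1..L r}. exp (logit p q \<rho> \<phi> x y r l))"
    using assms by (intro sum_pos) auto
  then show ?thesis
    unfolding cond_y_def logit_def[symmetric] by (simp add: ln_div)
qed

lemma neg_ln_cond_y_convex_comb:
  assumes "0 \<le> u" "u \<le> 1" "1 \<le> L r"
  shows "- ln (cond_y p q L (\<lambda>s j l. (1 - u) * \<rho>1 s j l + u * \<rho>2 s j l)
                 (\<lambda>r j a b. (1 - u) * \<phi>1 r j a b + u * \<phi>2 r j a b) x y r)
           \<le> (1 - u) * - ln (cond_y p q L \<rho>1 \<phi>1 x y r) + u * - ln (cond_y p q L \<rho>2 \<phi>2 x y r)"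
  unfolding neg_ln_cond_y[where L = L and r = r, OF assms(3)] logit_convex_comb
  using ln_sum_exp_convex_comb[OF assms(1,2), of "{1..L r}"
      "logit p q \<rho>1 \<phi>1 x y r" "logit p q \<rho>2 \<phi>2 x y r"] assms(3)
  by (simp only: right_diff_distrib) auto

theorem proposition1:
  fixes p q :: nat and L :: "nat \<Rightarrow> nat" and x :: "nat \<Rightarrow> real" and y :: "nat \<Rightarrow> nat"
    and \<beta>1 \<beta>2 :: "nat \<Rightarrow> nat \<Rightarrow> real" and \<alpha>1 \<alpha>2 :: "nat \<Rightarrow> real"
    and \<rho>1 \<rho>2 :: "nat \<Rightarrow> nat \<Rightarrow> nat \<Rightarrow> real" and \<phi>1 \<phi>2 :: "nat \<Rightarrow> nat \<Rightarrow> nat \<Rightarrow> nat \<Rightarrow> real"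
    and u :: real
  assumes "\<forall>j\<in>{1..q}. L j \<ge> 1"
    and "\<forall>j\<in>{1..q}. y j \<in> {1..L j}"
    and "param_region p q L \<beta>1 \<phi>1"
    and "param_region p q L \<beta>2 \<phi>2"
    and "0 \<le> u" and "u \<le> 1"
  shows "neg_log_pl p q L
           (\<lambda>s t. (1 - u) * \<beta>1 s t + u * \<beta>2 s t)
           (\<lambda>s. (1 - u) * \<alpha>1 s + u * \<alpha>2 s)
           (\<lambda>s j l. (1 - u) * \<rho>1 s j l + u * \<rho>2 s j l)
           (\<lambda>r j a b. (1 - u) * \<phi>1 r j a b + u * \<phi>2 r j a b) x y
         \<le> (1 - u) * neg_log_pl p q L \<beta>1 \<alpha>1 \<rho>1 \<phi>1 x y
           + u * neg_log_pl p q L \<beta>2 \<alpha>2 \<rho>2 \<phi>2 x y"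
proof -
  \<comment> \<open>Neither the symmetry constraints nor \<open>y j \<in> {1..L j}\<close> are needed: convexity holds on
      the whole half-space \<open>\<beta> s s > 0\<close>.\<close>
  have "(\<Sum>s\<in>{1..p}. - ln (cond_x p q (\<lambda>s t. (1 - u) * \<beta>1 s t + u * \<beta>2 s t)
            (\<lambda>s. (1 - u) * \<alpha>1 s + u * \<alpha>2 s) (\<lambda>s j l. (1 - u) * \<rho>1 s j l + u * \<rho>2 s j l) x y s))
        \<le> (1 - u) * (\<Sum>s\<in>{1..p}. - ln (cond_x p q \<beta>1 \<alpha>1 \<rho>1 x y s))
          + u * (\<Sum>s\<in>{1..p}. - ln (cond_x p q \<beta>2 \<alpha>2 \<rho>2 x y s))"
    using assms(3,4,5,6)
    by (intro sum_convex_comb_le neg_ln_cond_x_convex_comb) (auto simp: param_region_def)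
  moreover have "(\<Sum>r\<in>{1..q}. - ln (cond_y p q L (\<lambda>s j l. (1 - u) * \<rho>1 s j l + u * \<rho>2 s j l)
            (\<lambda>r j a b. (1 - u) * \<phi>1 r j a b + u * \<phi>2 r j a b) x y r))
        \<le> (1 - u) * (\<Sum>r\<in>{1..q}. - ln (cond_y p q L \<rho>1 \<phi>1 x y r))
          + u * (\<Sum>r\<in>{1..q}. - ln (cond_y p q L \<rho>2 \<phi>2 x y r))"
    using assms(1,5,6) by (intro sum_convex_comb_le neg_ln_cond_y_convex_comb) auto
  ultimately show ?thesis
    unfolding neg_log_pl_def sum_negf by (simp add: algebra_simps)
qed

end
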